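(* Let $n\ge 2$, $c_1,\dots,c_n>0$, and fix $i\in\{1,\dots,n\}$. Let $Q_i\in\mathbb{R}^{n\times n}$ be the symmetric matrix with $(Q_i)_{ii}=\frac{n-2}{c_i^2}$, $(Q_i)_{jj}=\frac{1}{c_j^2}$ and $(Q_i)_{ij}=(Q_i)_{ji}=-\frac{1}{c_ic_j}$ for $j\neq i$, and all other entries $0$. Then $Q_i$ has $n-1$ positive eigenvalues, no zero eigenvalue and exactly one negative eigenvalue, i.e. $\mathrm{inertia}(Q_i)=\{n-1,0,1\}$.
   Context: $\mathrm{inertia}(Q)=\{a,b,c\}$ means $Q$ has $a$ positive, $b$ zero and $c$ negative eigenvalues (counted with multiplicity). *)

theory Defs
  imports "Jordan_Normal_Form.Char_Poly"
begin

definition inertia :: "real mat \<Rightarrow> nat \<times> nat \<times> nat" where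
  "inertia A =
    ((\<Sum>a\<in>{a. a > 0 \<and> poly (char_poly A) a = 0}. order a (char_poly A)),
     order 0 (char_poly A),
     (\<Sum>a\<in>{a. a < 0 \<and> poly (char_poly A) a = 0}. order a (char_poly A)))"

text \<open>The matrix Q_i (indices 0-based: i < n).\<close>
definition Qmat :: "nat \<Rightarrow> (nat \<Rightarrow> real) \<Rightarrow> nat \<Rightarrow> real mat" where
  "Qmat n c i = mat n n (\<lambda>(j, k).
     if j = k then (if j = i then (real n - 2) / (c i)\<^sup>2 else 1 / (c j)\<^sup>2)
     else if j = i \<or> k = i then - 1 / (c j * c k)
     else 0)"

end

(*
  Put \<delta> = 1 / c_i^2 and r(x) = prod_{k ~= i} (x - 1 / c_k^2). Expanding det (x I - Q_i) along
  the arrowhead pattern of Q_i gives its characteristic polynomial P(x) = (x + \<delta>) r(x) - \<delta> x r'(x),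
  which is -\<delta> x^2 e^(x/\<delta>) times the derivative of g(x) = r(x) e^(-x/\<delta>) / x.
  Hence, by Rolle, P has a root strictly between any two consecutive positive roots of r, and,
  since g vanishes at the largest root of r and is positive beyond it, the mean value theorem
  gives a root of P above that one. A root of r of multiplicity m is also a root of P of
  multiplicity at least m - 1, so P has at least deg r = n - 1 positive roots counted with
  multiplicity. Moreover P(0) = \<delta> r(0) has sign (-1)^(n-1) while P is monic of degree n, so P
  has a negative root. Since deg P = n, this accounts for all roots of P.
*)

theory Submission
  imports Defs
begin

lemma permutes_fixing_all_but_one_eq_id:
  assumes "p permutes S" and "\<And>x. x \<in> S - {i} \<Longrightarrow> p x = x"
  shows "p = id"
  using permutes_superset[OF assms, of "{i}"] by simp

lemma permutes_arrowhead_cases: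
  assumes p: "p permutes S" and i: "i \<in> S"
    and into_pivot: "\<And>j. j \<in> S - {i} \<Longrightarrow> p j = j \<or> p j = i"
  shows "p = id \<or> (\<exists>j\<in>S - {i}. p = Transposition.transpose i j)"
proof (cases "\<exists>j\<in>S - {i}. p j = i")
  case False
  then have "p x = x" if "x \<in> S - {i}" for x
    using into_pivot[OF that] that by blast
  then show ?thesis
    using permutes_fixing_all_but_one_eq_id[OF p] by blast
next
  case True
  then obtain j where j: "j \<in> S - {i}" "p j = i"
    by blast
  have "Transposition.transpose i j \<circ> p = id"
  proof (rule permutes_fixing_all_but_one_eq_id)
    show "Transposition.transpose i j \<circ> p permutes S"
      using p i j(1) by (intro permutes_compose permutes_swap_id) auto
    fix x assume x: "x \<in> S - {i}"
    show "(Transposition.transpose i j \<circ> p) x = x"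
    proof (cases "x = j")
      case False
      then have "p x \<noteq> i"
        using j(2) inj_eq[OF permutes_inj[OF p], of x j] by simp
      then show ?thesis
        using into_pivot[OF x] x False by simp
    qed (use j in simp)
  qed
  then have "p = Transposition.transpose i j"
    by (simp add: fun_eq_iff) (metis transpose_involutory)
  then show ?thesis
    using j(1) by blast
qed

lemma prod_transpose_diagonal:
  assumes "finite N" and "i \<in> N" and "j \<in> N" and "i \<noteq> j"
  shows "(\<Prod>k\<in>N. f k (Transposition.transpose i j k)) = f i j * f j i * (\<Prod>k\<in>N - {i, j}. f k k)"
proof -
  have "(\<Prod>k\<in>N. f k (Transposition.transpose i j k))
      = f i j * f j i * (\<Prod>k\<in>N - {i, j}. f k (Transposition.transpose i j k))"
    using assms by (simp add: prod.remove[of N i] prod.remove[of "N - {i}" j] insert_Diff_if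
        Diff_insert2[symmetric] mult.assoc)
  also have "(\<Prod>k\<in>N - {i, j}. f k (Transposition.transpose i j k)) = (\<Prod>k\<in>N - {i, j}. f k k)"
    by (rule prod.cong) auto
  finally show ?thesis .
qed

lemma det_arrowhead_support:
  fixes A :: "'a::comm_ring_1 mat"
  assumes A: "A \<in> carrier_mat n n" and i: "i < n"
    and off: "\<And>j k. j < n \<Longrightarrow> k < n \<Longrightarrow> j \<noteq> k \<Longrightarrow> j \<noteq> i \<Longrightarrow> k \<noteq> i \<Longrightarrow> A $$ (j, k) = 0"
  shows "det A = (\<Sum>p\<in>insert id ((\<lambda>j. Transposition.transpose i j) ` ({0..<n} - {i})).
    signof p * (\<Prod>k\<in>{0..<n}. A $$ (k, p k)))"
  (is "_ = (\<Sum>p\<in>?T. ?F p)")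
proof -
  have iN: "i \<in> {0..<n}"
    using i by simp
  have "?F p = 0" if p: "p permutes {0..<n}" and other: "p \<notin> ?T" for p
  proof -
    obtain j where j: "j \<in> {0..<n} - {i}" "p j \<noteq> j" "p j \<noteq> i"
      using permutes_arrowhead_cases[OF p iN] other by blast
    then have "A $$ (j, p j) = 0"
      using off permutes_in_image[OF p, of j] by simp
    then have "(\<Prod>k\<in>{0..<n}. A $$ (k, p k)) = 0"
      using j(1) by (intro prod_zero) auto
    then show ?thesis
      by simp
  qed
  moreover have "?T \<subseteq> {p. p permutes {0..<n}}"
    using iN by (auto intro: permutes_swap_id)
  ultimately show ?thesis
    unfolding det_def'[OF A]
    by (intro sum.mono_neutral_right) (auto simp: finite_permutations)
qed

lemma det_arrowhead:
  fixes A :: "'a::comm_ring_1 mat"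
  assumes A: "A \<in> carrier_mat n n" and i: "i < n"
    and off: "\<And>j k. j < n \<Longrightarrow> k < n \<Longrightarrow> j \<noteq> k \<Longrightarrow> j \<noteq> i \<Longrightarrow> k \<noteq> i \<Longrightarrow> A $$ (j, k) = 0"
  shows "det A = (\<Prod>k\<in>{0..<n}. A $$ (k, k))
    - (\<Sum>j\<in>{0..<n} - {i}. A $$ (i, j) * A $$ (j, i) * (\<Prod>k\<in>{0..<n} - {i, j}. A $$ (k, k)))"
proof -
  define N where "N = {0..<n}"
  define F where "F p = signof p * (\<Prod>k\<in>N. A $$ (k, p k))" for p
  define \<tau> where "\<tau> j = Transposition.transpose i j" for j
  have "det A = (\<Sum>p\<in>insert id (\<tau> ` (N - {i})). F p)"
    unfolding N_def F_def \<tau>_def by (rule det_arrowhead_support[OF A i off])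
  also have "\<dots> = F id + (\<Sum>j\<in>N - {i}. F (\<tau> j))"
  proof -
    have \<tau>_pivot: "\<tau> j i = j" for j
      by (simp add: \<tau>_def)
    then have "inj_on \<tau> (N - {i})"
      by (metis inj_onI)
    moreover have "id \<notin> \<tau> ` (N - {i})"
      using \<tau>_pivot by (metis DiffD2 id_apply imageE singletonI)
    ultimately show ?thesis
      by (simp add: N_def sum.reindex)
  qed
  also have "(\<Sum>j\<in>N - {i}. F (\<tau> j))
      = (\<Sum>j\<in>N - {i}. - (A $$ (i, j) * A $$ (j, i) * (\<Prod>k\<in>N - {i, j}. A $$ (k, k))))"
  proof (rule sum.cong[OF refl])
    fix j assume "j \<in> N - {i}"
    then show "F (\<tau> j) = - (A $$ (i, j) * A $$ (j, i) * (\<Prod>k\<in>N - {i, j}. A $$ (k, k)))"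
      using i prod_transpose_diagonal[of N i j "\<lambda>k l. A $$ (k, l)"]
      by (simp add: F_def \<tau>_def N_def sign_swap_id)
  qed
  finally show ?thesis
    by (simp add: F_def N_def sum_negf)
qed

lemma poly_root_above_if_neg:
  fixes p :: "real poly"
  assumes "lead_coeff p > 0" and "poly p z < 0"
  shows "\<exists>x>z. poly p x = 0"
proof -
  obtain X where X: "\<And>x. x \<ge> X \<Longrightarrow> poly p x \<ge> lead_coeff p"
    using poly_pinfty_gt_lc[OF assms(1)] by auto
  have "poly p (max X (z + 1)) > 0"
    using X[of "max X (z + 1)"] assms(1) by simp
  then show ?thesis
    using poly_IVT_pos[OF _ assms(2), of "max X (z + 1)"] by force
qed

lemma poly_root_below_zero:
  fixes p :: "real poly"
  assumes "lead_coeff p > 0" and "(-1) ^ degree p * poly p 0 < 0"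
  shows "\<exists>x<0. poly p x = 0"
proof -
  define q where "q = Polynomial.smult ((-1) ^ degree p) (p \<circ>\<^sub>p [:0, -1:])"
  have poly_q: "poly q x = (-1) ^ degree p * poly p (- x)" for x
    by (simp add: q_def poly_pcompose)
  have "lead_coeff (p \<circ>\<^sub>p [:0, -1:]) = lead_coeff p * (-1) ^ degree p"
    by (subst lead_coeff_comp) auto
  then have "lead_coeff q = lead_coeff p"
    by (simp add: q_def mult.left_commute flip: power_mult_distrib)
  then obtain x where "x > 0" "poly q x = 0"
    using poly_root_above_if_neg[of q 0] assms by (auto simp: poly_q)
  then show ?thesis
    by (intro exI[of _ "- x"]) (simp add: poly_q)
qed

lemma sum_order_le_sum_order_roots:
  fixes p :: "real poly"
  assumes "p \<noteq> 0" and "finite A" and "\<And>x. x \<in> A \<Longrightarrow> Q x"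
  shows "(\<Sum>x\<in>A. order x p) \<le> (\<Sum>x | Q x \<and> poly p x = 0. order x p)"
proof -
  have "(\<Sum>x\<in>A. order x p) = (\<Sum>x\<in>A \<inter> {x. poly p x = 0}. order x p)"
    using assms(2) by (intro sum.mono_neutral_right) (auto simp: order_root)
  also have "\<dots> \<le> (\<Sum>x | Q x \<and> poly p x = 0. order x p)"
    using assms poly_roots_finite[OF assms(1)] by (intro sum_mono2) auto
  finally show ?thesis .
qed

lemma sum_order_pos_neg_roots_le_degree:
  fixes p :: "real poly"
  assumes "p \<noteq> 0" and "poly p 0 \<noteq> 0"
  shows "(\<Sum>x | x > 0 \<and> poly p x = 0. order x p) + (\<Sum>x | x < 0 \<and> poly p x = 0. order x p) \<le> degree p"
proof -
  define Pos Neg where "Pos = {x. x > 0 \<and> poly p x = 0}" and "Neg = {x. x < 0 \<and> poly p x = 0}"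
  have "x \<noteq> 0" if "poly p x = 0" for x
    using that assms(2) by auto
  then have roots: "{x. poly p x = 0} = Pos \<union> Neg"
    unfolding Pos_def Neg_def by (auto simp: neq_iff)
  have "finite Pos" and "finite Neg"
    using poly_roots_finite[OF assms(1)] unfolding roots by simp_all
  then have "(\<Sum>x\<in>Pos. order x p) + (\<Sum>x\<in>Neg. order x p) = (\<Sum>x\<in>Pos \<union> Neg. order x p)"
    by (intro sum.union_disjoint[symmetric]) (auto simp: Pos_def Neg_def)
  also have "\<dots> \<le> degree p"
    using sum_order_le_degree[OF assms(1)] unfolding roots .
  finally show ?thesis
    unfolding Pos_def Neg_def .
qed

definition arrowhead_poly :: "real \<Rightarrow> real poly \<Rightarrow> real poly" where
  "arrowhead_poly \<delta> r = [:\<delta>, 1:] * r - Polynomial.smult \<delta> ([:0, 1:] * pderiv r)"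

lemma poly_arrowhead_poly:
  "poly (arrowhead_poly \<delta> r) x = (x + \<delta>) * poly r x - \<delta> * x * poly (pderiv r) x"
  by (simp add: arrowhead_poly_def algebra_simps)

lemma degree_arrowhead_poly:
  assumes "r \<noteq> 0"
  shows "degree (arrowhead_poly \<delta> r) = Suc (degree r)"
    and "lead_coeff (arrowhead_poly \<delta> r) = lead_coeff r"
proof -
  have main_deg: "degree ([:\<delta>, 1:] * r) = Suc (degree r)"
    using assms by (simp del: mult_pCons_left add: degree_mult_eq)
  have main_lc: "lead_coeff ([:\<delta>, 1:] * r) = lead_coeff r"
    by (simp only: lead_coeff_mult) simp
  have "degree ([:0, 1:] * pderiv r) \<le> degree r"
  proof (cases "degree r")
    case 0
    then show ?thesis by (simp add: pderiv_eq_0_iff[THEN iffD2])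
  next
    case (Suc m)
    then show ?thesis by (simp add: degree_pderiv)
  qed
  then have "degree (Polynomial.smult \<delta> ([:0, 1:] * pderiv r)) \<le> degree r"
    using degree_smult_le[of \<delta>] le_trans by blast
  then have small: "degree (- Polynomial.smult \<delta> ([:0, 1:] * pderiv r)) < degree ([:\<delta>, 1:] * r)"
    unfolding degree_minus main_deg by linarith
  have sum_form: "arrowhead_poly \<delta> r = - Polynomial.smult \<delta> ([:0, 1:] * pderiv r) + [:\<delta>, 1:] * r"
    by (simp add: arrowhead_poly_def)
  show "degree (arrowhead_poly \<delta> r) = Suc (degree r)"
    unfolding sum_form degree_add_eq_right[OF small] main_deg ..
  show "lead_coeff (arrowhead_poly \<delta> r) = lead_coeff r"
    unfolding sum_form lead_coeff_add_le[OF small] main_lc ..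
qed

lemma arrowhead_poly_nonzero: "r \<noteq> 0 \<Longrightarrow> arrowhead_poly \<delta> r \<noteq> 0"
  using degree_arrowhead_poly(2)[of r \<delta>] leading_coeff_0_iff by metis

lemma has_real_derivative_arrowhead_quotient:
  fixes r :: "real poly"
  assumes "\<delta> \<noteq> 0" and "z \<noteq> 0"
  shows "((\<lambda>x. poly r x * exp (- x / \<delta>) / x) has_real_derivative
           - poly (arrowhead_poly \<delta> r) z * exp (- z / \<delta>) / (\<delta> * z\<^sup>2)) (at z)"
proof -
  have "((\<lambda>x. poly r x * exp (- x / \<delta>) / x) has_real_derivative
      ((poly (pderiv r) z * exp (- z / \<delta>) + poly r z * (exp (- z / \<delta>) * (- 1 / \<delta>))) * z
        - poly r z * exp (- z / \<delta>)) / z\<^sup>2) (at z)"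
    using assms by (auto intro!: derivative_eq_intros simp: power2_eq_square)
  moreover have "((poly (pderiv r) z * exp (- z / \<delta>) + poly r z * (exp (- z / \<delta>) * (- 1 / \<delta>))) * z
        - poly r z * exp (- z / \<delta>)) / z\<^sup>2
      = - ((z + \<delta>) * poly r z - \<delta> * z * poly (pderiv r) z) * exp (- z / \<delta>) / (\<delta> * z\<^sup>2)"
    using assms by (simp add: field_simps)
  ultimately show ?thesis
    by (simp only: poly_arrowhead_poly)
qed

lemma order_le_Suc_order_arrowhead_poly:
  assumes "r \<noteq> 0"
  shows "order e r \<le> Suc (order e (arrowhead_poly \<delta> r))"
proof (cases "poly r e = 0")
  case True
  define m where "m = order e (pderiv r)"
  have order_r: "order e r = Suc m"
    unfolding m_def by (rule order_pderiv[OF assms True])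
  have "[:-e, 1:] ^ m dvd r"
    using order_r order_divides[of e m r] by simp
  moreover have "[:-e, 1:] ^ m dvd pderiv r"
    unfolding m_def by (rule order_1)
  ultimately have "[:-e, 1:] ^ m dvd arrowhead_poly \<delta> r"
    unfolding arrowhead_poly_def by (intro dvd_diff dvd_mult dvd_smult)
  then have "m \<le> order e (arrowhead_poly \<delta> r)"
    using order_divides arrowhead_poly_nonzero[OF assms] by blast
  then show ?thesis
    using order_r by simp
qed (simp add: order_root)

lemma arrowhead_quotient_mean_value:
  fixes r :: "real poly"
  assumes "\<delta> \<noteq> 0" and "0 < a" and "a < b"
  shows "\<exists>z. a < z \<and> z < b \<and>
    poly r b * exp (- b / \<delta>) / b - poly r a * exp (- a / \<delta>) / a
      = (b - a) * (- poly (arrowhead_poly \<delta> r) z * exp (- z / \<delta>) / (\<delta> * z\<^sup>2))"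
proof -
  define g where "g x = poly r x * exp (- x / \<delta>) / x" for x
  have deriv: "(g has_real_derivative - poly (arrowhead_poly \<delta> r) z * exp (- z / \<delta>) / (\<delta> * z\<^sup>2)) (at z)"
    if "z > 0" for z
    unfolding g_def[abs_def] using assms(1) that by (intro has_real_derivative_arrowhead_quotient) auto
  have "isCont g x" if "x > 0" for x
    using deriv[OF that] by (rule DERIV_isCont)
  then have "continuous_on {a..b} g"
    using assms(2) by (intro continuous_at_imp_continuous_on) auto
  moreover have "g differentiable (at x)" if "a < x" for x
    using deriv[of x] assms(2) that real_differentiable_def by force
  ultimately obtain l z where z: "a < z" "z < b" "(g has_real_derivative l) (at z)" "g b - g a = (b - a) * l"
    using MVT[OF assms(3), of g] by auto
  have "z > 0"
    using z(1) assms(2) by simp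
  then have "l = - poly (arrowhead_poly \<delta> r) z * exp (- z / \<delta>) / (\<delta> * z\<^sup>2)"
    using DERIV_unique[OF z(3)] deriv by blast
  then show ?thesis
    using z(1,2,4) unfolding g_def by blast
qed

lemma arrowhead_poly_root_between:
  assumes "\<delta> \<noteq> 0" and "0 < a" and "a < b" and "poly r a = 0" and "poly r b = 0"
  shows "\<exists>z. a < z \<and> z < b \<and> poly (arrowhead_poly \<delta> r) z = 0"
  using arrowhead_quotient_mean_value[OF assms(1-3), of r] assms by auto

lemma arrowhead_poly_root_above:
  assumes "\<delta> > 0" and "lead_coeff r > 0" and "0 < a" and "a < b" and "poly r a = 0" and "poly r b > 0"
  shows "\<exists>z>a. poly (arrowhead_poly \<delta> r) z = 0"
proof -
  obtain z where z: "a < z" "z < b"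
    and mvt: "poly r b * exp (- b / \<delta>) / b
      = (b - a) * (- poly (arrowhead_poly \<delta> r) z * exp (- z / \<delta>) / (\<delta> * z\<^sup>2))"
    using arrowhead_quotient_mean_value[of \<delta> a b r] assms by auto
  have "0 < poly r b * exp (- b / \<delta>) / b"
    using assms(3-6) by simp
  then have "0 < (b - a) * (- poly (arrowhead_poly \<delta> r) z * (exp (- z / \<delta>) / (\<delta> * z\<^sup>2)))"
    unfolding mvt by (simp only: times_divide_eq_right)
  then have "0 < - poly (arrowhead_poly \<delta> r) z * (exp (- z / \<delta>) / (\<delta> * z\<^sup>2))"
    by (rule zero_less_mult_pos) (use assms(4) in simp)
  moreover have "0 < exp (- z / \<delta>) / (\<delta> * z\<^sup>2)"
    using assms(1,3) z(1) by simp
  ultimately have "0 < - poly (arrowhead_poly \<delta> r) z"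
    by (rule zero_less_mult_pos2)
  moreover have "lead_coeff (arrowhead_poly \<delta> r) > 0"
    using assms(2) degree_arrowhead_poly(2)[of r] by fastforce
  ultimately obtain x where "x > z" and "poly (arrowhead_poly \<delta> r) x = 0"
    using poly_root_above_if_neg[of "arrowhead_poly \<delta> r" z] by auto
  then show ?thesis
    using z(1) by (intro exI[of _ x]) auto
qed

lemma arrowhead_poly_root_after:
  assumes "\<delta> > 0" and "lead_coeff r > 0" and "e > 0" and "poly r e = 0"
  shows "\<exists>\<xi>>e. poly (arrowhead_poly \<delta> r) \<xi> = 0 \<and> (\<forall>e'>e. poly r e' = 0 \<longrightarrow> \<xi> < e')"
proof -
  define U where "U = {e'. e < e' \<and> poly r e' = 0}"
  have "r \<noteq> 0"
    using assms(2) by auto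
  then have "finite U"
    unfolding U_def using poly_roots_finite[of r] by simp
  show ?thesis
  proof (cases "U = {}")
    case False
    define b where "b = Min U"
    have "b \<in> U" and b_min: "\<And>e'. e' \<in> U \<Longrightarrow> b \<le> e'"
      using \<open>finite U\<close> False by (simp_all add: b_def)
    then obtain \<xi> where "e < \<xi>" "\<xi> < b" "poly (arrowhead_poly \<delta> r) \<xi> = 0"
      using arrowhead_poly_root_between[of \<delta> e b r] assms by (auto simp: U_def)
    moreover have "\<xi> < e'" if "e < e'" and "poly r e' = 0" for e'
      using b_min[of e'] that \<open>\<xi> < b\<close> by (simp add: U_def)
    ultimately show ?thesis
      by blast
  next
    case True
    obtain X where X: "\<And>x. x \<ge> X \<Longrightarrow> poly r x \<ge> lead_coeff r"
      using poly_pinfty_gt_lc[OF assms(2)] by auto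
    have "poly r (max X (e + 1)) > 0"
      using X[of "max X (e + 1)"] assms(2) by simp
    then obtain \<xi> where "\<xi> > e" "poly (arrowhead_poly \<delta> r) \<xi> = 0"
      using arrowhead_poly_root_above[of \<delta> r e "max X (e + 1)"] assms by (auto simp: less_max_iff_disj)
    then show ?thesis
      using True unfolding U_def by auto
  qed
qed

lemma arrowhead_poly_interlacing_roots:
  assumes "\<delta> > 0" and "lead_coeff r > 0"
  defines "E \<equiv> {x. x > 0 \<and> poly r x = 0}"
  obtains \<xi> where "inj_on \<xi> E" and "E \<inter> \<xi> ` E = {}"
    and "\<And>e. e \<in> E \<Longrightarrow> e < \<xi> e \<and> poly (arrowhead_poly \<delta> r) (\<xi> e) = 0"
proof -
  have "\<forall>e\<in>E. \<exists>\<xi>. e < \<xi> \<and> poly (arrowhead_poly \<delta> r) \<xi> = 0 \<and> (\<forall>e'>e. poly r e' = 0 \<longrightarrow> \<xi> < e')"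
    using arrowhead_poly_root_after[OF assms(1,2)] unfolding E_def by blast
  from bchoice[OF this] obtain \<xi> where \<xi>:
    "\<forall>e\<in>E. e < \<xi> e \<and> poly (arrowhead_poly \<delta> r) (\<xi> e) = 0 \<and> (\<forall>e'>e. poly r e' = 0 \<longrightarrow> \<xi> e < e')"
    by blast
  have "strict_mono_on E \<xi>"
  proof (rule strict_mono_onI)
    fix e e' assume "e \<in> E" and "e' \<in> E" and "e < e'"
    then have "\<xi> e < e'" and "e' < \<xi> e'"
      using \<xi> by (auto simp: E_def)
    then show "\<xi> e < \<xi> e'"
      by simp
  qed
  then have "inj_on \<xi> E"
    by (rule strict_mono_on_imp_inj_on)
  moreover have "\<xi> e \<notin> E" if "e \<in> E" for e
    using \<xi> that by (auto simp: E_def)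
  ultimately show ?thesis
    using that \<xi> by blast
qed

lemma sum_order_pos_roots_le_arrowhead_poly:
  assumes "\<delta> > 0" and "lead_coeff r > 0"
  shows "(\<Sum>x | x > 0 \<and> poly r x = 0. order x r)
    \<le> (\<Sum>x | x > 0 \<and> poly (arrowhead_poly \<delta> r) x = 0. order x (arrowhead_poly \<delta> r))"
proof -
  define P where "P = arrowhead_poly \<delta> r"
  define E where "E = {x. x > 0 \<and> poly r x = 0}"
  obtain \<xi> where inj: "inj_on \<xi> E" and disjoint: "E \<inter> \<xi> ` E = {}"
    and \<xi>: "\<And>e. e \<in> E \<Longrightarrow> e < \<xi> e \<and> poly P (\<xi> e) = 0"
    using arrowhead_poly_interlacing_roots[OF assms] unfolding P_def E_def by blast
  have "r \<noteq> 0"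
    using assms(2) by auto
  then have "P \<noteq> 0" and "finite E"
    unfolding P_def E_def using arrowhead_poly_nonzero poly_roots_finite[of r] by auto
  have "(\<Sum>e\<in>E. order e r) \<le> (\<Sum>e\<in>E. order e P + order (\<xi> e) P)"
  proof (rule sum_mono)
    fix e assume "e \<in> E"
    then have "order (\<xi> e) P \<noteq> 0"
      using \<xi> \<open>P \<noteq> 0\<close> order_root by blast
    then show "order e r \<le> order e P + order (\<xi> e) P"
      using order_le_Suc_order_arrowhead_poly[OF \<open>r \<noteq> 0\<close>, of e \<delta>] unfolding P_def by linarith
  qed
  also have "\<dots> = (\<Sum>x\<in>E \<union> \<xi> ` E. order x P)"
    using \<open>finite E\<close> disjoint by (simp add: sum.distrib sum.union_disjoint sum.reindex[OF inj])
  also have "\<dots> \<le> (\<Sum>x | x > 0 \<and> poly P x = 0. order x P)"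
  proof (rule sum_order_le_sum_order_roots)
    show "x > 0" if "x \<in> E \<union> \<xi> ` E" for x
      using that \<xi> by (force simp: E_def)
  qed (use \<open>P \<noteq> 0\<close> \<open>finite E\<close> in auto)
  finally show ?thesis
    unfolding P_def E_def .
qed

lemma degree_prod_linear:
  fixes d :: "'a \<Rightarrow> real"
  assumes "finite K"
  shows "degree (\<Prod>k\<in>K. [:- d k, 1:]) = card K"
  using assms by (simp add: degree_prod_eq_sum_degree)

lemma lead_coeff_prod_linear: "lead_coeff (\<Prod>k\<in>K. [:- d k, 1:]) = (1 :: real)"
  unfolding lead_coeff_prod by simp

lemma poly_arrowhead_poly_prod_linear:
  fixes d :: "'a \<Rightarrow> real"
  assumes "finite K"
  shows "poly (arrowhead_poly \<delta> (\<Prod>k\<in>K. [:- d k, 1:])) x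
    = (x - (real (card K) - 1) * \<delta>) * (\<Prod>k\<in>K. x - d k) - (\<Sum>j\<in>K. \<delta> * d j * (\<Prod>k\<in>K - {j}. x - d k))"
proof -
  define R where "R = (\<Prod>k\<in>K. x - d k)"
  define R' where "R' = (\<Sum>j\<in>K. \<Prod>k\<in>K - {j}. x - d k)"
  have "poly (\<Prod>k\<in>K. [:- d k, 1:]) x = R"
    by (simp add: R_def poly_prod)
  moreover have "poly (pderiv (\<Prod>k\<in>K. [:- d k, 1:])) x = R'"
    by (simp add: R'_def pderiv_prod poly_sum poly_prod pderiv_pCons)
  moreover have "(\<Sum>j\<in>K. \<delta> * d j * (\<Prod>k\<in>K - {j}. x - d k)) = \<delta> * (x * R' - real (card K) * R)"
  proof -
    have "d j * (\<Prod>k\<in>K - {j}. x - d k) = x * (\<Prod>k\<in>K - {j}. x - d k) - R" if "j \<in> K" for j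
      using that assms by (simp add: R_def prod.remove algebra_simps)
    then have "(\<Sum>j\<in>K. d j * (\<Prod>k\<in>K - {j}. x - d k)) = x * R' - real (card K) * R"
      by (simp add: R'_def sum_subtractf sum_distrib_left)
    then show ?thesis
      by (simp add: sum_distrib_left[symmetric] mult.assoc)
  qed
  ultimately show ?thesis
    unfolding poly_arrowhead_poly R_def[symmetric] by (simp add: algebra_simps)
qed

lemma poly_char_poly_Qmat:
  assumes c: "\<And>j. j < n \<Longrightarrow> c j \<noteq> 0" and i: "i < n"
  defines "d \<equiv> \<lambda>k. 1 / (c k)\<^sup>2" and "K \<equiv> {0..<n} - {i}"
  shows "poly (char_poly (Qmat n c i)) x
    = (x - (real n - 2) * d i) * (\<Prod>k\<in>K. x - d k) - (\<Sum>j\<in>K. d i * d j * (\<Prod>k\<in>K - {j}. x - d k))"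
proof -
  define Q where "Q = Qmat n c i"
  define B where "B = - char_matrix Q x"
  have Q: "Q \<in> carrier_mat n n"
    by (simp add: Q_def Qmat_def)
  then have B: "B \<in> carrier_mat n n"
    by (simp add: B_def)
  have B_entry: "B $$ (j, k) = (if j = k then x else 0) - Q $$ (j, k)" if "j < n" and "k < n" for j k
    using Q that by (simp add: B_def char_matrix_def)
  have Q_entry: "Q $$ (j, k) = (if j = k then (if j = i then (real n - 2) * d i else d j)
      else if j = i \<or> k = i then - 1 / (c j * c k) else 0)" if "j < n" and "k < n" for j k
    using that by (simp add: Q_def Qmat_def d_def)
  have "poly (char_poly Q) x = det B"
    unfolding B_def by (rule char_poly_matrix[OF Q])
  also have "\<dots> = (\<Prod>k\<in>{0..<n}. B $$ (k, k))
      - (\<Sum>j\<in>{0..<n} - {i}. B $$ (i, j) * B $$ (j, i) * (\<Prod>k\<in>{0..<n} - {i, j}. B $$ (k, k)))"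
    by (rule det_arrowhead[OF B i]) (simp add: B_entry Q_entry)
  also have "(\<Prod>k\<in>{0..<n}. B $$ (k, k)) = (x - (real n - 2) * d i) * (\<Prod>k\<in>K. x - d k)"
  proof -
    have "(\<Prod>k\<in>K. B $$ (k, k)) = (\<Prod>k\<in>K. x - d k)"
      by (rule prod.cong) (auto simp: K_def B_entry Q_entry)
    then show ?thesis
      using i by (simp add: K_def prod.remove B_entry Q_entry)
  qed
  also have "(\<Sum>j\<in>{0..<n} - {i}. B $$ (i, j) * B $$ (j, i) * (\<Prod>k\<in>{0..<n} - {i, j}. B $$ (k, k)))
      = (\<Sum>j\<in>K. d i * d j * (\<Prod>k\<in>K - {j}. x - d k))"
  proof (rule sum.cong)
    fix j assume "j \<in> K"
    then have j: "j < n" "j \<noteq> i"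
      by (auto simp: K_def)
    have "B $$ (i, j) * B $$ (j, i) = d i * d j"
      using j i c[of i] c[of j] by (simp add: B_entry Q_entry d_def field_simps power2_eq_square)
    moreover have "(\<Prod>k\<in>{0..<n} - {i, j}. B $$ (k, k)) = (\<Prod>k\<in>K - {j}. x - d k)"
      by (rule prod.cong) (auto simp: K_def B_entry Q_entry)
    ultimately show "B $$ (i, j) * B $$ (j, i) * (\<Prod>k\<in>{0..<n} - {i, j}. B $$ (k, k))
        = d i * d j * (\<Prod>k\<in>K - {j}. x - d k)"
      by simp
  qed (simp add: K_def)
  finally show ?thesis
    by (simp add: Q_def)
qed

lemma char_poly_Qmat:
  assumes "\<And>j. j < n \<Longrightarrow> c j \<noteq> 0" and "i < n"
  shows "char_poly (Qmat n c i)
    = arrowhead_poly (1 / (c i)\<^sup>2) (\<Prod>k\<in>{0..<n} - {i}. [:- (1 / (c k)\<^sup>2), 1:])"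
  using assms(2)
  by (intro poly_ext)
    (simp add: poly_char_poly_Qmat[OF assms] poly_arrowhead_poly_prod_linear of_nat_diff)

lemma sum_order_pos_roots_prod_linear:
  fixes d :: "'a \<Rightarrow> real"
  assumes "finite K" and "\<And>k. k \<in> K \<Longrightarrow> d k > 0"
  shows "(\<Sum>x | x > 0 \<and> poly (\<Prod>k\<in>K. [:- d k, 1:]) x = 0. order x (\<Prod>k\<in>K. [:- d k, 1:])) = card K"
proof -
  define r where "r = (\<Prod>k\<in>K. [:- d k, 1:])"
  have "r \<noteq> 0"
    using assms(1) by (simp add: r_def)
  have "proots r = (\<Sum>k\<in>K. {#d k#})"
    unfolding r_def by (subst proots_prod) auto
  then have "card K = size (proots r)"
    by simp
  also have "\<dots> = (\<Sum>x | poly r x = 0. order x r)"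
    using \<open>r \<noteq> 0\<close> by (simp add: size_multiset_overloaded_eq)
  also have "{x. poly r x = 0} = {x. x > 0 \<and> poly r x = 0}"
    using assms by (auto simp: r_def poly_prod prod_zero_iff)
  finally show ?thesis
    by (simp add: r_def)
qed

lemma arrowhead_poly_prod_linear_at_zero:
  fixes d :: "'a \<Rightarrow> real"
  assumes "finite K"
  shows "(-1) ^ card K * poly (arrowhead_poly \<delta> (\<Prod>k\<in>K. [:- d k, 1:])) 0 = \<delta> * (\<Prod>k\<in>K. d k)"
  by (simp add: poly_arrowhead_poly poly_prod prod_uminus mult.left_commute flip: power_mult_distrib)

lemma arrowhead_poly_prod_linear_neg_root:
  fixes d :: "'a \<Rightarrow> real"
  assumes "finite K" and "\<And>k. k \<in> K \<Longrightarrow> d k > 0" and "\<delta> > 0"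
  shows "\<exists>x<0. poly (arrowhead_poly \<delta> (\<Prod>k\<in>K. [:- d k, 1:])) x = 0"
proof (rule poly_root_below_zero)
  define r where "r = (\<Prod>k\<in>K. [:- d k, 1:])"
  have "r \<noteq> 0" and "degree r = card K"
    using assms(1) by (simp_all add: r_def degree_prod_linear)
  have "lead_coeff r = 1"
    unfolding r_def by (rule lead_coeff_prod_linear)
  then show "lead_coeff (arrowhead_poly \<delta> r) > 0"
    unfolding degree_arrowhead_poly(2)[OF \<open>r \<noteq> 0\<close>] by simp
  have "(-1) ^ degree (arrowhead_poly \<delta> r) * poly (arrowhead_poly \<delta> r) 0 = - (\<delta> * (\<Prod>k\<in>K. d k))"
    using arrowhead_poly_prod_linear_at_zero[OF assms(1), of \<delta> d] \<open>r \<noteq> 0\<close> \<open>degree r = card K\<close>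
    by (simp add: r_def degree_arrowhead_poly)
  also have "\<dots> < 0"
    using assms by (simp add: prod_pos)
  finally show "(-1) ^ degree (arrowhead_poly \<delta> r) * poly (arrowhead_poly \<delta> r) 0 < 0" .
qed

lemma root_counts_arrowhead_poly_prod_linear:
  fixes d :: "'a \<Rightarrow> real"
  assumes K: "finite K" and d_pos: "\<And>k. k \<in> K \<Longrightarrow> d k > 0" and "\<delta> > 0"
  defines "P \<equiv> arrowhead_poly \<delta> (\<Prod>k\<in>K. [:- d k, 1:])"
  shows "(\<Sum>x | x > 0 \<and> poly P x = 0. order x P) = card K"
    and "order 0 P = 0"
    and "(\<Sum>x | x < 0 \<and> poly P x = 0. order x P) = 1"
proof -
  define r where "r = (\<Prod>k\<in>K. [:- d k, 1:])"
  have "r \<noteq> 0" and "lead_coeff r > 0"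
    using K by (simp_all add: r_def lead_coeff_prod_linear)
  then have "P \<noteq> 0" and "degree P = Suc (card K)"
    using K by (simp_all add: P_def r_def arrowhead_poly_nonzero degree_arrowhead_poly degree_prod_linear)
  have "(\<Prod>k\<in>K. d k) > 0"
    using d_pos by (simp add: prod_pos)
  then have "poly P 0 \<noteq> 0"
    using arrowhead_poly_prod_linear_at_zero[OF K, of \<delta> d] \<open>\<delta> > 0\<close> by (auto simp: P_def)
  then show "order 0 P = 0"
    by (simp add: order_0I)
  have pos: "card K \<le> (\<Sum>x | x > 0 \<and> poly P x = 0. order x P)"
    using sum_order_pos_roots_le_arrowhead_poly[OF \<open>\<delta> > 0\<close> \<open>lead_coeff r > 0\<close>]
      sum_order_pos_roots_prod_linear[where d = d, OF K d_pos]
    by (simp add: P_def r_def)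
  obtain a where "a < 0" and "poly P a = 0"
    using arrowhead_poly_prod_linear_neg_root[where d = d, OF K d_pos \<open>\<delta> > 0\<close>] by (auto simp: P_def)
  then have "1 \<le> order a P"
    using \<open>P \<noteq> 0\<close> order_root by (metis less_one not_le)
  also have "\<dots> \<le> (\<Sum>x | x < 0 \<and> poly P x = 0. order x P)"
    using sum_order_le_sum_order_roots[OF \<open>P \<noteq> 0\<close>, of "{a}" "\<lambda>x. x < 0"] \<open>a < 0\<close> by simp
  finally have neg: "1 \<le> (\<Sum>x | x < 0 \<and> poly P x = 0. order x P)" .
  have "(\<Sum>x | x > 0 \<and> poly P x = 0. order x P) + (\<Sum>x | x < 0 \<and> poly P x = 0. order x P)
      \<le> Suc (card K)"
    using sum_order_pos_neg_roots_le_degree[OF \<open>P \<noteq> 0\<close> \<open>poly P 0 \<noteq> 0\<close>] \<open>degree P = Suc (card K)\<close>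
    by simp
  then show "(\<Sum>x | x > 0 \<and> poly P x = 0. order x P) = card K"
    and "(\<Sum>x | x < 0 \<and> poly P x = 0. order x P) = 1"
    using pos neg by linarith+
qed

theorem mainTheorem5:
  fixes n i :: nat and c :: "nat \<Rightarrow> real"
  assumes "n \<ge> 2" and "\<And>j. j < n \<Longrightarrow> c j > 0" and "i < n"
  shows "inertia (Qmat n c i) = (n - 1, 0, 1)"
proof -
  define d where "d k = 1 / (c k)\<^sup>2" for k
  define K where "K = {0..<n} - {i}"
  have char_poly: "char_poly (Qmat n c i) = arrowhead_poly (d i) (\<Prod>k\<in>K. [:- d k, 1:])"
    unfolding K_def d_def by (rule char_poly_Qmat) (use assms(2,3) in force)+
  have d_pos: "d k > 0" if "k < n" for k
    using assms(2)[OF that] by (simp add: d_def)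
  have K: "finite K" "card K = n - 1" "\<And>k. k \<in> K \<Longrightarrow> d k > 0"
    using assms(3) d_pos by (auto simp: K_def)
  show ?thesis
    using root_counts_arrowhead_poly_prod_linear[where d = d, OF K(1,3) d_pos[OF assms(3)]] K(2)
    unfolding inertia_def char_poly by simp
qed

end
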